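(* Let $k=\mathbb{R}$ or $k=\mathbb{C}$, let $\mathcal Z\subset k$ be a discrete subring closed under conjugation, $(a_n)_{n\ge1}$ a sequence in $\mathcal Z$ and $x_0\in k$ with $x_n=T_{a_n}\cdots T_{a_1}x_0$ defined and $|x_n|<1$ for all $n\ge0$. Then for each $n$ there exist $p_n,q_n\in\mathcal Z$ with $|q_n|\ge1$ such that $p_n/q_n=T^{-1}_{a_1}\cdots T^{-1}_{a_n}0$ and \[\left|T^{-1}_{a_1}\cdots T^{-1}_{a_n}0-x_0\right|=\frac{1}{|q_n|}\prod_{i=0}^n|x_i|.\]
   Context: For $a\in\mathcal Z$, $T_ax=x^{-1}-a$ and $T_a^{-1}x=(x+a)^{-1}$. Discrete means discrete in the Euclidean topology. *)

theory Defs
  imports "HOL-Analysis.Analysis"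
begin

definition complex_subring :: "complex set \<Rightarrow> bool" where
  "complex_subring Z \<longleftrightarrow> 0 \<in> Z \<and> 1 \<in> Z \<and>
     (\<forall>x\<in>Z. \<forall>y\<in>Z. x + y \<in> Z \<and> x * y \<in> Z) \<and> (\<forall>x\<in>Z. - x \<in> Z)"

definition T :: "complex \<Rightarrow> complex \<Rightarrow> complex" where
  "T a x = inverse x - a"

definition Tinv :: "complex \<Rightarrow> complex \<Rightarrow> complex" where
  "Tinv a x = inverse (x + a)"

text \<open>orbit a x0 n = T_{a_n} ... T_{a_1} x0 (the sequence a is indexed from 1).\<close>
fun orbit :: "(nat \<Rightarrow> complex) \<Rightarrow> complex \<Rightarrow> nat \<Rightarrow> complex" where
  "orbit a x0 0 = x0"
| "orbit a x0 (Suc n) = T (a (Suc n)) (orbit a x0 n)"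

fun Tinv_comp :: "(nat \<Rightarrow> complex) \<Rightarrow> nat \<Rightarrow> complex \<Rightarrow> complex" where
  "Tinv_comp a 0 = id"
| "Tinv_comp a (Suc n) = Tinv_comp a n \<circ> Tinv (a (Suc n))"

end

theory Submission
  imports Defs
begin

text \<open>
  Induction on n, peeling off the first map. If the shifted data (a(k+1))_k, x_1 give
  T^-1_a(2) ... T^-1_a(n+1) 0 = p'/q' with |q' x_1 - p'| = |x_1| ... |x_(n+1)|, then p = q' and
  q = p' + a(1) q' represent T^-1_a(1) (p'/q'), and since x_1 = 1/x_0 - a(1) we get
  q x_0 - p = x_0 (p' - q' x_1), which contributes the factor |x_0|.
  The denominator q cannot vanish: otherwise |p| = |x_0| ... |x_(n+1)| < 1, whereas a nonzero
  element of a discrete ring has norm at least 1, because the powers of an element of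
  norm less than 1 accumulate at 0.
\<close>

lemma complex_subring_power:
  assumes "complex_subring Z" and "z \<in> Z"
  shows "z ^ n \<in> Z"
  using assms by (induction n) (auto simp: complex_subring_def)

lemma discrete_complex_subring_norm_ge_1:
  assumes ring: "complex_subring Z" and disc: "discrete Z" and "z \<in> Z" and "z \<noteq> 0"
  shows "norm z \<ge> 1"
proof (rule ccontr)
  assume "\<not> norm z \<ge> 1"
  then have "norm z < 1" by simp
  have "0 isolated_in Z"
    using ring disc by (simp add: complex_subring_def discreteD)
  then obtain d where "d > 0" and isolated: "\<And>y. y \<in> Z \<Longrightarrow> dist 0 y < d \<Longrightarrow> y = 0"
    by (metis isolated_inE_dist)
  obtain n where "norm z ^ n < d"
    using real_arch_pow_inv[OF \<open>d > 0\<close> \<open>norm z < 1\<close>] by blast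
  then have "z ^ n = 0"
    by (intro isolated complex_subring_power[OF ring \<open>z \<in> Z\<close>]) (simp add: norm_power)
  with \<open>z \<noteq> 0\<close> show False by simp
qed

lemma Tinv_comp_Suc_first:
  "Tinv_comp a (Suc n) y = Tinv (a 1) (Tinv_comp (\<lambda>k. a (Suc k)) n y)"
  by (induction n arbitrary: y) auto

lemma orbit_Suc_shift:
  "orbit (\<lambda>k. a (Suc k)) (orbit a x0 1) k = orbit a x0 (Suc k)"
  by (induction k) auto

lemma Tinv_comp_fraction_error:
  assumes ring: "complex_subring Z" and disc: "discrete Z"
    and "\<forall>n\<ge>1. a n \<in> Z" and "\<forall>n. orbit a x0 n \<noteq> 0" and "\<forall>n. norm (orbit a x0 n) < 1"
  shows "\<exists>p\<in>Z. \<exists>q\<in>Z. q \<noteq> 0 \<and> Tinv_comp a n 0 = p / q \<and>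
           norm (q * x0 - p) = (\<Prod>i=0..n. norm (orbit a x0 i))"
  using assms(3-5)
proof (induction n arbitrary: a x0)
  case 0
  have "(0::complex) \<in> Z" "(1::complex) \<in> Z"
    using ring by (auto simp: complex_subring_def)
  then show ?case by (intro bexI[where x=0] bexI[where x=1]) auto
next
  case (Suc n)
  define b where "b = (\<lambda>k. a (Suc k))"
  define x1 where "x1 = orbit a x0 1"
  have orbit_b: "orbit b x1 k = orbit a x0 (Suc k)" for k
    unfolding b_def x1_def by (rule orbit_Suc_shift)
  have "\<forall>n\<ge>1. b n \<in> Z" "\<forall>k. orbit b x1 k \<noteq> 0" and b_small: "\<forall>k. norm (orbit b x1 k) < 1"
    using Suc.prems unfolding orbit_b by (simp_all add: b_def del: orbit.simps(2))
  then obtain p' q' where "p' \<in> Z" "q' \<in> Z" "q' \<noteq> 0" and p'q': "Tinv_comp b n 0 = p' / q'"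
    and error': "norm (q' * x1 - p') = (\<Prod>i=0..n. norm (orbit b x1 i))"
    using Suc.IH by blast
  define p where "p = q'"
  define q where "q = p' + a 1 * q'"
  have "p \<in> Z" using \<open>q' \<in> Z\<close> by (simp add: p_def)
  have "q \<in> Z"
    using ring \<open>p' \<in> Z\<close> \<open>q' \<in> Z\<close> Suc.prems(1) by (simp add: q_def complex_subring_def)
  have "x0 \<noteq> 0" using Suc.prems(2) by (metis orbit.simps(1))
  have "q * x0 - p = x0 * (p' - q' * x1)"
    using \<open>x0 \<noteq> 0\<close> by (simp add: p_def q_def x1_def T_def field_simps)
  then have "norm (q * x0 - p) = norm x0 * norm (q' * x1 - p')"
    by (simp add: norm_mult norm_minus_commute)
  also have prod_Suc: "\<dots> = (\<Prod>i=0..Suc n. norm (orbit a x0 i))"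
    by (simp add: error' orbit_b prod.atLeast0_atMost_Suc_shift del: prod.cl_ivl_Suc)
  finally have error: "norm (q * x0 - p) = (\<Prod>i=0..Suc n. norm (orbit a x0 i))" .
  have "(\<Prod>i=0..n. norm (orbit b x1 i)) \<le> 1"
    using b_small by (intro prod_le_1) (simp add: less_imp_le)
  moreover have "norm x0 < 1"
    using Suc.prems(3) by (metis orbit.simps(1))
  ultimately have "(\<Prod>i=0..Suc n. norm (orbit a x0 i)) < 1"
    unfolding prod_Suc[symmetric] error' by (meson mult_left_le norm_ge_zero order.strict_trans1)
  moreover have "norm p \<ge> 1"
    using discrete_complex_subring_norm_ge_1[OF ring disc \<open>p \<in> Z\<close>] \<open>q' \<noteq> 0\<close> by (simp add: p_def)
  ultimately have "q \<noteq> 0" using error by auto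
  have "Tinv_comp a (Suc n) 0 = inverse (p' / q' + a 1)"
    unfolding Tinv_comp_Suc_first p'q'[unfolded b_def] Tinv_def by simp
  also have "\<dots> = p / q"
    using \<open>q' \<noteq> 0\<close> \<open>q \<noteq> 0\<close> by (simp add: p_def q_def field_simps)
  finally show ?case
    using \<open>p \<in> Z\<close> \<open>q \<in> Z\<close> \<open>q \<noteq> 0\<close> error by blast
qed

theorem lemma2p1:
  fixes K Z :: "complex set" and a :: "nat \<Rightarrow> complex" and x0 :: complex
  assumes field: "K = \<real> \<or> K = UNIV"
    and Zsub: "Z \<subseteq> K"
    and ring: "complex_subring Z"
    and disc: "discrete Z"
    and conj: "\<forall>z\<in>Z. cnj z \<in> Z"
    and aZ: "\<forall>n\<ge>1. a n \<in> Z"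
    and x0K: "x0 \<in> K"
    and defined: "\<forall>n. orbit a x0 n \<noteq> 0"
    and small: "\<forall>n. norm (orbit a x0 n) < 1"
  shows "\<forall>n. \<exists>p\<in>Z. \<exists>q\<in>Z. norm q \<ge> 1 \<and> p / q = Tinv_comp a n 0 \<and>
           norm (Tinv_comp a n 0 - x0) = (1 / norm q) * (\<Prod>i=0..n. norm (orbit a x0 i))"
proof
  fix n
  obtain p q where "p \<in> Z" "q \<in> Z" "q \<noteq> 0" and pq: "Tinv_comp a n 0 = p / q"
    and error: "norm (q * x0 - p) = (\<Prod>i=0..n. norm (orbit a x0 i))"
    using Tinv_comp_fraction_error[OF ring disc aZ defined small] by blast
  have "Tinv_comp a n 0 - x0 = - (q * x0 - p) / q"
    using \<open>q \<noteq> 0\<close> pq by (simp add: field_simps)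
  then have "norm (Tinv_comp a n 0 - x0) = (1 / norm q) * (\<Prod>i=0..n. norm (orbit a x0 i))"
    by (metis error norm_divide norm_minus_cancel divide_inverse inverse_eq_divide mult.commute)
  moreover have "norm q \<ge> 1"
    using discrete_complex_subring_norm_ge_1[OF ring disc \<open>q \<in> Z\<close> \<open>q \<noteq> 0\<close>] .
  ultimately show "\<exists>p\<in>Z. \<exists>q\<in>Z. norm q \<ge> 1 \<and> p / q = Tinv_comp a n 0 \<and>
           norm (Tinv_comp a n 0 - x0) = (1 / norm q) * (\<Prod>i=0..n. norm (orbit a x0 i))"
    using \<open>p \<in> Z\<close> \<open>q \<in> Z\<close> pq by metis
qed

end
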